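(* Let $T_1$ and $T_2$ be equidistant trees on leaf set $\{1,\dots,n\}$ with ultrametrics $u^1,u^2\in\mathbb{R}^e$, $e=\binom n2$. If $(\operatorname{argmax})^i\{u^1\}=(\operatorname{argmax})^i\{u^2\}$ for all $0<i<e$, then $T_1$ and $T_2$ have the same tree topology.
   Context: An equidistant tree is a rooted phylogenetic tree with nonnegative edge lengths and all root-to-leaf distances equal; its ultrametric is the vector $u=(u_{12},\dots,u_{n-1,n})$ of pairwise leaf distances (for all distinct $i,j,k$ the maximum of $u_{ij},u_{ik},u_{jk}$ is attained at least twice). For a vector $x$, $(\operatorname{argmax})^i\{x\}$ denotes the set of indices of entries of $x$ achieving the $i$-th largest value among the entries of $x$. *)

theory Defs
  imports Complex_Main
begin

text \<open>Rooted phylogenetic trees on leaf set {1..n} are encoded by their cluster systems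
  (hierarchies): each vertex is identified with the set of leaves below it.
  The tree topology of the tree is exactly its hierarchy.\<close>

definition hierarchy :: "nat \<Rightarrow> nat set set \<Rightarrow> bool" where
  "hierarchy n H \<longleftrightarrow>
     H \<subseteq> Pow {1..n} \<and> {} \<notin> H \<and> {1..n} \<in> H \<and> (\<forall>i\<in>{1..n}. {i} \<in> H) \<and>
     (\<forall>A\<in>H. \<forall>B\<in>H. A \<subseteq> B \<or> B \<subseteq> A \<or> A \<inter> B = {})"

text \<open>An equidistant tree: topology H together with vertex heights h (distance from the
  vertex down to any of its leaves; all leaves at height 0, so all root-to-leaf distances
  are equal). Edge from child A to parent B has length h B - h A: leaf edges are
  nonnegative and internal edges positive (the topology is that of the tree with
  zero-length internal edges contracted).\<close>

definition equidistant_tree :: "nat \<Rightarrow> nat set set \<Rightarrow> (nat set \<Rightarrow> real) \<Rightarrow> bool" where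
  "equidistant_tree n H h \<longleftrightarrow>
     hierarchy n H \<and> (\<forall>i\<in>{1..n}. h {i} = 0) \<and>
     (\<forall>A\<in>H. \<forall>B\<in>H. A \<subset> B \<longrightarrow> h A \<le> h B) \<and>
     (\<forall>A\<in>H. \<forall>B\<in>H. A \<subset> B \<and> 2 \<le> card A \<longrightarrow> h A < h B)"

definition tree_ultrametric :: "nat set set \<Rightarrow> (nat set \<Rightarrow> real) \<Rightarrow> nat \<Rightarrow> nat \<Rightarrow> real" where
  "tree_ultrametric H h i j = 2 * h (\<Inter>{A\<in>H. i \<in> A \<and> j \<in> A})"

definition leaf_pairs :: "nat \<Rightarrow> (nat \<times> nat) set" where
  "leaf_pairs n = {(i, j). 1 \<le> i \<and> i < j \<and> j \<le> n}"

text \<open>(argmax)^k {x}: the indices of entries achieving the k-th largest (distinct) value;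
  empty if there are fewer than k distinct values.\<close>

definition argmax_k :: "'i set \<Rightarrow> ('i \<Rightarrow> real) \<Rightarrow> nat \<Rightarrow> 'i set" where
  "argmax_k E x k =
     (if 1 \<le> k \<and> k \<le> card (x ` E)
      then {p \<in> E. x p = rev (sorted_list_of_set (x ` E)) ! (k - 1)}
      else {})"

end

theory Submission
  imports Defs
begin

text \<open>The argmax classes of a distance vector are its level sets listed from the top, so they
  determine the rank of every entry among the distinct values. Knowing all but the last class
  suffices, because an entry outside the first e - 1 classes can only lie in the last one. Hence
  the two ultrametrics order the leaf pairs identically. In an equidistant tree the most recent
  common ancestor of leaves i and j is the ball of all x with u(i,x) at most u(i,j), and every
  cluster with at least two leaves is such an ancestor; so the topology is determined by the
  order of the distances alone.\<close>

lemma nth_rev_sorted_list_of_set_eq_iff: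
  fixes S :: "'a::linorder set"
  assumes "finite S" and "v \<in> S"
  shows "r < card S \<and> rev (sorted_list_of_set S) ! r = v \<longleftrightarrow> r = card {w \<in> S. v < w}"
proof -
  define L where "L = rev (sorted_list_of_set S)"
  have L: "set L = S" "length L = card S" "distinct L" "sorted_wrt (>) L"
    using assms(1) by (auto simp: L_def sorted_wrt_rev)
  have rank: "card {w \<in> S. v < w} = r" if "r < length L" "L ! r = v" for r
  proof -
    have "{w \<in> S. v < w} = set (take r L)"
    proof (intro set_eqI iffI)
      fix w assume "w \<in> {w \<in> S. v < w}"
      then obtain s where s: "s < length L" "L ! s = w" "v < w"
        using L(1) by (auto simp: in_set_conv_nth)
      have "s < r"
        using s that sorted_wrt_nth_less[OF L(4), of r s] by (cases r s rule: linorder_cases) auto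
      then show "w \<in> set (take r L)"
        using s by (auto simp: in_set_conv_nth)
    next
      fix w assume "w \<in> set (take r L)"
      then obtain s where "s < r" "L ! s = w"
        using that by (auto simp: in_set_conv_nth)
      then show "w \<in> {w \<in> S. v < w}"
        using that L(1) sorted_wrt_nth_less[OF L(4), of s r] nth_mem[of s L] by auto
    qed
    then show ?thesis
      using that L(3) by (simp add: distinct_card)
  qed
  obtain r' where "r' < length L" "L ! r' = v"
    using assms(2) L(1) by (auto simp: in_set_conv_nth)
  then show ?thesis
    using rank L(2) unfolding L_def[symmetric] by auto
qed

definition value_rank :: "'i set \<Rightarrow> ('i \<Rightarrow> real) \<Rightarrow> 'i \<Rightarrow> nat" where
  "value_rank E x p = card {v \<in> x ` E. x p < v}"

lemma argmax_k_iff_value_rank: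
  assumes "finite E" and "p \<in> E"
  shows "p \<in> argmax_k E x k \<longleftrightarrow> k = Suc (value_rank E x p)"
  using nth_rev_sorted_list_of_set_eq_iff[of "x ` E" "x p" "k - 1"] assms
  by (cases k) (auto simp: argmax_k_def value_rank_def)

lemma value_rank_less_card:
  assumes "finite E" and "p \<in> E"
  shows "value_rank E x p < card E"
proof -
  have "{v \<in> x ` E. x p < v} \<subset> x ` E"
    using assms(2) by auto
  then have "value_rank E x p < card (x ` E)"
    unfolding value_rank_def using assms(1) by (simp add: psubset_card_mono)
  also have "\<dots> \<le> card E"
    using assms(1) by (rule card_image_le)
  finally show ?thesis .
qed

lemma value_rank_le_iff:
  assumes "finite E" and "p \<in> E" and "q \<in> E"
  shows "value_rank E x q \<le> value_rank E x p \<longleftrightarrow> x p \<le> x q"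
proof (cases "x p \<le> x q")
  case True
  then have "{v \<in> x ` E. x q < v} \<subseteq> {v \<in> x ` E. x p < v}"
    by auto
  then show ?thesis
    using True assms(1) by (simp add: value_rank_def card_mono)
next
  case False
  then have "{v \<in> x ` E. x p < v} \<subset> {v \<in> x ` E. x q < v}"
    using assms(2) by auto
  moreover have "finite {v \<in> x ` E. x q < v}"
    using assms(1) by simp
  ultimately show ?thesis
    using False unfolding value_rank_def by (meson psubset_card_mono leD)
qed

text \<open>Every rank is below e, so unless both ranks equal e - 1, one of them is read off from an
  argmax class that the two vectors share.\<close>

lemma value_rank_eq_if_argmax_k_eq:
  assumes "finite E" and "card E \<le> e"
    and argmax_eq: "\<forall>k. 0 < k \<and> k < e \<longrightarrow> argmax_k E x k = argmax_k E y k"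
    and "p \<in> E"
  shows "value_rank E x p = value_rank E y p"
proof -
  have rank_x: "p \<in> argmax_k E x k \<longleftrightarrow> k = Suc (value_rank E x p)" for k
    using argmax_k_iff_value_rank[OF assms(1,4)] .
  have rank_y: "p \<in> argmax_k E y k \<longleftrightarrow> k = Suc (value_rank E y p)" for k
    using argmax_k_iff_value_rank[OF assms(1,4)] .
  consider "Suc (value_rank E x p) < e" | "Suc (value_rank E y p) < e"
    | "Suc (value_rank E x p) = e" "Suc (value_rank E y p) = e"
    using value_rank_less_card[OF assms(1,4), of x] value_rank_less_card[OF assms(1,4), of y] assms(2)
    by linarith
  then show ?thesis
  proof cases
    case 1
    then show ?thesis
      using argmax_eq rank_x rank_y by (metis Suc_inject zero_less_Suc)
  next
    case 2
    then show ?thesis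
      using argmax_eq rank_x rank_y by (metis Suc_inject zero_less_Suc)
  qed simp
qed

lemma le_iff_le_if_argmax_k_eq:
  assumes "finite E" and "card E \<le> e"
    and "\<forall>k. 0 < k \<and> k < e \<longrightarrow> argmax_k E x k = argmax_k E y k"
    and "p \<in> E" and "q \<in> E"
  shows "x p \<le> x q \<longleftrightarrow> y p \<le> y q"
  using value_rank_le_iff[OF assms(1,4,5)] value_rank_eq_if_argmax_k_eq[OF assms(1-3)] assms(4,5)
  by metis

lemma hierarchy_finite: "hierarchy n H \<Longrightarrow> finite H"
  unfolding hierarchy_def by (meson finite_Pow_iff finite_atLeastAtMost finite_subset)

lemma hierarchy_chain_through_point:
  assumes "hierarchy n H" and "F \<subseteq> H" and "\<And>A. A \<in> F \<Longrightarrow> i \<in> A"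
  shows "subset.chain H F"
proof -
  have "A \<subseteq> B \<or> B \<subseteq> A \<or> A \<inter> B = {}" if "A \<in> F" "B \<in> F" for A B
    using assms(1,2) that unfolding hierarchy_def by blast
  then show ?thesis
    using assms(2,3) unfolding subset_chain_def by blast
qed

definition lca :: "nat set set \<Rightarrow> nat \<Rightarrow> nat \<Rightarrow> nat set" where
  "lca H i j = \<Inter>{A \<in> H. i \<in> A \<and> j \<in> A}"

lemma tree_ultrametric_eq_lca: "tree_ultrametric H h i j = 2 * h (lca H i j)"
  by (simp add: tree_ultrametric_def lca_def)

lemma lca_commute: "lca H i j = lca H j i"
  unfolding lca_def by meson

lemma tree_ultrametric_commute: "tree_ultrametric H h i j = tree_ultrametric H h j i"
  by (simp add: tree_ultrametric_eq_lca lca_commute)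

lemma mem_lca: "i \<in> lca H i j" "j \<in> lca H i j"
  by (auto simp: lca_def)

lemma lca_least: "A \<in> H \<Longrightarrow> i \<in> A \<Longrightarrow> j \<in> A \<Longrightarrow> lca H i j \<subseteq> A"
  unfolding lca_def by blast

lemma lca_in_hierarchy:
  assumes "hierarchy n H" and "i \<in> {1..n}" and "j \<in> {1..n}"
  shows "lca H i j \<in> H"
proof -
  let ?F = "{A \<in> H. i \<in> A \<and> j \<in> A}"
  have "{1..n} \<in> ?F"
    using assms by (simp add: hierarchy_def)
  have "finite ?F"
    using hierarchy_finite[OF assms(1)] by simp
  moreover have "?F \<noteq> {}"
    using \<open>{1..n} \<in> ?F\<close> by blast
  moreover have "subset.chain H ?F"
    by (rule hierarchy_chain_through_point[OF assms(1), of _ i]) auto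
  ultimately have "\<Inter>?F \<in> ?F"
    by (rule Inter_in_chain)
  then show ?thesis
    by (simp add: lca_def)
qed

lemma lca_subset_or_supset:
  assumes "hierarchy n H" and "i \<in> {1..n}" and "j \<in> {1..n}" and "k \<in> {1..n}"
  shows "lca H i j \<subseteq> lca H i k \<or> lca H i k \<subseteq> lca H i j"
proof -
  have "subset.chain H {lca H i j, lca H i k}"
    using assms
    by (intro hierarchy_chain_through_point[of n _ _ i]) (auto simp: lca_in_hierarchy mem_lca)
  then show ?thesis
    by (simp add: subset_chain_def)
qed

lemma hierarchy_cluster_eq_lca:
  assumes "hierarchy n H" and "C \<in> H" and "2 \<le> card C" and "i \<in> C"
  shows "\<exists>j\<in>C. j \<noteq> i \<and> lca H i j = C"
proof -
  have C_leaves: "C \<subseteq> {1..n}"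
    using assms(1,2) by (auto simp: hierarchy_def)
  have "C - {i} \<noteq> {}"
  proof
    assume "C - {i} = {}"
    then have "card C \<le> card {i}"
      by (intro card_mono) auto
    with assms(3) show False
      by simp
  qed
  let ?G = "lca H i ` (C - {i})"
  have "lca H i x \<in> H" if "x \<in> C" for x
    using that assms(4) C_leaves by (intro lca_in_hierarchy[OF assms(1)]) auto
  then have "?G \<subseteq> H"
    by blast
  then have "subset.chain H ?G"
    by (rule hierarchy_chain_through_point[OF assms(1), of _ i]) (auto simp: mem_lca)
  moreover have "finite ?G"
    using finite_subset[OF C_leaves] by simp
  ultimately have "\<Union>?G \<in> ?G"
    using \<open>C - {i} \<noteq> {}\<close> by (intro Union_in_chain) simp_all
  moreover have "\<Union>?G = C"
  proof
    show "\<Union>?G \<subseteq> C"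
      using lca_least[OF assms(2,4)] by blast
    obtain k where "k \<in> C - {i}"
      using \<open>C - {i} \<noteq> {}\<close> by blast
    have "x \<in> \<Union>?G" if "x \<in> C" for x
    proof (cases "x = i")
      case True
      then show ?thesis
        using \<open>k \<in> C - {i}\<close> mem_lca(1)[of i H k] by blast
    next
      case False
      then show ?thesis
        using that mem_lca(2)[of x H i] by blast
    qed
    then show "C \<subseteq> \<Union>?G"
      by blast
  qed
  ultimately have "C \<in> ?G"
    by simp
  then show ?thesis
    by blast
qed

text \<open>The centre i is inserted separately because only off-diagonal distances are compared.\<close>

definition ultrametric_ball :: "nat \<Rightarrow> (nat \<Rightarrow> nat \<Rightarrow> real) \<Rightarrow> nat \<Rightarrow> nat \<Rightarrow> nat set" where
  "ultrametric_ball n u i j = insert i {x \<in> {1..n}. x \<noteq> i \<and> u i x \<le> u i j}"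

definition ultrametric_clusters :: "nat \<Rightarrow> (nat \<Rightarrow> nat \<Rightarrow> real) \<Rightarrow> nat set set" where
  "ultrametric_clusters n u =
     {{i} | i. i \<in> {1..n}} \<union>
     {ultrametric_ball n u i j | i j. i \<in> {1..n} \<and> j \<in> {1..n} \<and> i \<noteq> j}"

lemma ultrametric_clusters_cong:
  assumes "\<And>i x j. i \<in> {1..n} \<Longrightarrow> x \<in> {1..n} \<Longrightarrow> j \<in> {1..n} \<Longrightarrow> x \<noteq> i \<Longrightarrow> j \<noteq> i \<Longrightarrow>
      u i x \<le> u i j \<longleftrightarrow> v i x \<le> v i j"
  shows "ultrametric_clusters n u = ultrametric_clusters n v"
proof -
  have "ultrametric_ball n u i j = ultrametric_ball n v i j"
    if "i \<in> {1..n}" "j \<in> {1..n}" "i \<noteq> j" for i j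
    using assms that unfolding ultrametric_ball_def by blast
  then show ?thesis
    unfolding ultrametric_clusters_def by blast
qed

lemma lca_eq_ultrametric_ball:
  assumes tree: "equidistant_tree n H h" and "i \<in> {1..n}" and "j \<in> {1..n}" and "i \<noteq> j"
  shows "lca H i j = ultrametric_ball n (tree_ultrametric H h) i j"
proof -
  have hier: "hierarchy n H"
    using tree by (simp add: equidistant_tree_def)
  define C where "C = lca H i j"
  have C: "C \<in> H" "C \<subseteq> {1..n}"
    using lca_in_hierarchy[OF hier assms(2,3)] hier by (auto simp: C_def hierarchy_def)
  have "card {i, j} \<le> card C"
    using C(2) mem_lca[of i H j] mem_lca[of j H i] finite_subset
    by (intro card_mono) (auto simp: C_def)
  then have two_le_card: "2 \<le> card C"
    using assms(4) by simp
  have "x \<in> C \<longleftrightarrow> h (lca H i x) \<le> h C" if x: "x \<in> {1..n}" for x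
  proof
    assume "x \<in> C"
    then have "lca H i x \<subseteq> C"
      using lca_least[OF C(1)] mem_lca by (simp add: C_def)
    then show "h (lca H i x) \<le> h C"
      using tree lca_in_hierarchy[OF hier assms(2) x] C(1)
      by (cases "lca H i x = C") (auto simp: equidistant_tree_def)
  next
    assume "h (lca H i x) \<le> h C"
    \<comment> \<open>Since C has at least two leaves, heights increase strictly above it.\<close>
    moreover have "C \<subset> lca H i x" if "x \<notin> C"
      using lca_subset_or_supset[OF hier assms(2,3) x] mem_lca[of x H i] that
      by (auto simp: C_def lca_commute[of H x])
    ultimately show "x \<in> C"
      using tree lca_in_hierarchy[OF hier assms(2) x] C(1) two_le_card
      by (force simp: equidistant_tree_def)
  qed
  then show ?thesis
    using C(2) mem_lca[of i H j]
    by (auto simp: ultrametric_ball_def tree_ultrametric_eq_lca C_def)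
qed

lemma equidistant_tree_eq_ultrametric_clusters:
  assumes tree: "equidistant_tree n H h"
  shows "H = ultrametric_clusters n (tree_ultrametric H h)"
proof
  let ?u = "tree_ultrametric H h"
  have hier: "hierarchy n H"
    using tree by (simp add: equidistant_tree_def)
  show "H \<subseteq> ultrametric_clusters n ?u"
  proof
    fix C assume "C \<in> H"
    then have C: "C \<subseteq> {1..n}" "C \<noteq> {}"
      using hier by (auto simp: hierarchy_def)
    then obtain i where "i \<in> C"
      by blast
    show "C \<in> ultrametric_clusters n ?u"
    proof (cases "2 \<le> card C")
      case True
      then obtain j where "j \<in> C" "j \<noteq> i" "lca H i j = C"
        using hierarchy_cluster_eq_lca[OF hier \<open>C \<in> H\<close> _ \<open>i \<in> C\<close>] by blast
      moreover have "i \<in> {1..n}" "j \<in> {1..n}"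
        using C(1) \<open>i \<in> C\<close> \<open>j \<in> C\<close> by auto
      ultimately have "C = ultrametric_ball n ?u i j"
        using lca_eq_ultrametric_ball[OF tree] by metis
      then show ?thesis
        using \<open>i \<in> {1..n}\<close> \<open>j \<in> {1..n}\<close> \<open>j \<noteq> i\<close>
        unfolding ultrametric_clusters_def by blast
    next
      case False
      then have "C = {i}"
        using C \<open>i \<in> C\<close> card_le_Suc0_iff_eq[OF finite_subset[OF C(1)]] by auto
      then show ?thesis
        using C(1) \<open>i \<in> C\<close> unfolding ultrametric_clusters_def by blast
    qed
  qed
  show "ultrametric_clusters n ?u \<subseteq> H"
  proof
    fix C assume "C \<in> ultrametric_clusters n ?u"
    then consider i where "i \<in> {1..n}" "C = {i}"
      | i j where "i \<in> {1..n}" "j \<in> {1..n}" "i \<noteq> j" "C = ultrametric_ball n ?u i j"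
      unfolding ultrametric_clusters_def by blast
    then show "C \<in> H"
    proof cases
      case 1
      then show ?thesis
        using hier by (simp add: hierarchy_def)
    next
      case 2
      then show ?thesis
        using lca_eq_ultrametric_ball[OF tree] lca_in_hierarchy[OF hier] by metis
    qed
  qed
qed

lemma finite_leaf_pairs: "finite (leaf_pairs n)"
  by (rule finite_subset[of _ "{1..n} \<times> {1..n}"]) (auto simp: leaf_pairs_def)

lemma card_leaf_pairs_le: "card (leaf_pairs n) \<le> n choose 2"
proof -
  have "inj_on (\<lambda>(i, j). {i, j}) (leaf_pairs n)"
    by (auto simp: inj_on_def leaf_pairs_def doubleton_eq_iff)
  moreover have "(\<lambda>(i, j). {i, j}) ` leaf_pairs n \<subseteq> {B. B \<subseteq> {1..n} \<and> card B = 2}"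
    by (auto simp: leaf_pairs_def)
  ultimately have "card (leaf_pairs n) \<le> card {B. B \<subseteq> {1..n} \<and> card B = 2}"
    by (intro card_inj_on_le) auto
  also have "\<dots> = n choose 2"
    using n_subsets[of "{1..n}" 2] by simp
  finally show ?thesis .
qed

lemma le_iff_le_if_argmax_k_leaf_pairs_eq:
  assumes "\<And>i j. u i j = u j i" and "\<And>i j. v i j = v j i"
    and "\<forall>k. 0 < k \<and> k < n choose 2 \<longrightarrow>
           argmax_k (leaf_pairs n) (\<lambda>(i, j). u i j) k = argmax_k (leaf_pairs n) (\<lambda>(i, j). v i j) k"
    and "i \<in> {1..n}" and "x \<in> {1..n}" and "j \<in> {1..n}" and "x \<noteq> i" and "j \<noteq> i"
  shows "u i x \<le> u i j \<longleftrightarrow> v i x \<le> v i j"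
proof -
  have pair: "(min i y, max i y) \<in> leaf_pairs n" if "y \<in> {1..n}" "y \<noteq> i" for y
    using that assms(4) by (auto simp: leaf_pairs_def min_def max_def)
  have pair_value: "(\<lambda>(i, j). w i j) (min i y, max i y) = w i y"
    if "\<And>i j. w i j = w j i" for w :: "nat \<Rightarrow> nat \<Rightarrow> real" and y
    using that by (cases "i \<le> y") (auto simp: min_def max_def)
  show ?thesis
    using pair_value le_iff_le_if_argmax_k_eq[OF finite_leaf_pairs card_leaf_pairs_le assms(3)
        pair[OF assms(5,7)] pair[OF assms(6,8)]] assms(1,2)
    by metis
qed

theorem lemma2:
  fixes n :: nat and H1 H2 :: "nat set set" and h1 h2 :: "nat set \<Rightarrow> real"
  assumes "equidistant_tree n H1 h1"
    and "equidistant_tree n H2 h2"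
    and "\<forall>k. 0 < k \<and> k < n choose 2 \<longrightarrow>
           argmax_k (leaf_pairs n) (\<lambda>(i, j). tree_ultrametric H1 h1 i j) k =
           argmax_k (leaf_pairs n) (\<lambda>(i, j). tree_ultrametric H2 h2 i j) k"
  shows "H1 = H2"
proof -
  have "H1 = ultrametric_clusters n (tree_ultrametric H1 h1)"
    using assms(1) by (rule equidistant_tree_eq_ultrametric_clusters)
  also have "\<dots> = ultrametric_clusters n (tree_ultrametric H2 h2)"
    by (intro ultrametric_clusters_cong le_iff_le_if_argmax_k_leaf_pairs_eq[OF _ _ assms(3)])
      (simp_all add: tree_ultrametric_commute)
  also have "\<dots> = H2"
    using assms(2) by (rule equidistant_tree_eq_ultrametric_clusters[symmetric])
  finally show ?thesis .
qed

end
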